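(* Let $M=\{1,\dots,m\}$ carry the measure $\mu$ with atoms of positive masses $\mu_1,\dots,\mu_m$, and $N=\{1,\dots,n\}$ the measure $\nu$ with atoms of positive masses $\nu_1,\dots,\nu_n$. For real $m\times n$ matrices $a$ set $$\|a\|=\max_{i\in M}\sum_{j\in N}|a(i,j)|\nu_j,\qquad \|a\|^{\top}=\max_{j\in N}\sum_{i\in M}|a(i,j)|\mu_i,\qquad \|a\|_{\ell^1}=\sum_{(i,j)\in M\times N}|a(i,j)|\mu_i\nu_j,$$ and for $t>0$ $$|||a|||_t=\sup_{E,F}\big(\mu(E)\vee t^{-1}\nu(F)\big)^{-1}\,\|1_{E\times F}\cdot a\|_{\ell^1},$$ the supremum over nonempty $E\subset M$, $F\subset N$. Let $K_t(a)=\inf\{\|b\|+t\|c\|^{\top}: a=b+c\}$. Let $t>0$. Then for any matrix $a$ with $|||a|||_t\le 1$ there is a splitting $M\times N=A\cup B$ with $A\cap B=\emptyset$ such that $$\|1_A\cdot a\|\le 1,\qquad \|1_B\cdot a\|^{\top}\le 1/t;$$ consequently $K_t(a)\le 2\,|||a|||_t$ for every matrix $a$.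
   Context: $1_S$ denotes the indicator function of a set $S\subset M\times N$, and $\cdot$ denotes entrywise (pointwise) multiplication of matrices: $(b\cdot c)(i,j)=b(i,j)c(i,j)$. $u\vee v=\max(u,v)$. *)

theory Defs
  imports Complex_Main
begin

text \<open>Matrices on M = {1..m}, N = {1..n} are functions nat => nat => real;
  only entries on {1..m} x {1..n} matter. Masses mu i, nu j.\<close>

definition row_norm :: "nat \<Rightarrow> nat \<Rightarrow> (nat \<Rightarrow> real) \<Rightarrow> (nat \<Rightarrow> nat \<Rightarrow> real) \<Rightarrow> real" where
  "row_norm m n \<nu> a = Max ((\<lambda>i. \<Sum>j\<in>{1..n}. \<bar>a i j\<bar> * \<nu> j) ` {1..m})"

definition col_norm :: "nat \<Rightarrow> nat \<Rightarrow> (nat \<Rightarrow> real) \<Rightarrow> (nat \<Rightarrow> nat \<Rightarrow> real) \<Rightarrow> real" where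
  "col_norm m n \<mu> a = Max ((\<lambda>j. \<Sum>i\<in>{1..m}. \<bar>a i j\<bar> * \<mu> i) ` {1..n})"

definition l1_norm :: "nat \<Rightarrow> nat \<Rightarrow> (nat \<Rightarrow> real) \<Rightarrow> (nat \<Rightarrow> real) \<Rightarrow> (nat \<Rightarrow> nat \<Rightarrow> real) \<Rightarrow> real" where
  "l1_norm m n \<mu> \<nu> a = (\<Sum>i\<in>{1..m}. \<Sum>j\<in>{1..n}. \<bar>a i j\<bar> * \<mu> i * \<nu> j)"

definition ind_mult :: "(nat \<times> nat) set \<Rightarrow> (nat \<Rightarrow> nat \<Rightarrow> real) \<Rightarrow> (nat \<Rightarrow> nat \<Rightarrow> real)" where
  "ind_mult S a = (\<lambda>i j. if (i, j) \<in> S then a i j else 0)"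

definition meas :: "(nat \<Rightarrow> real) \<Rightarrow> nat set \<Rightarrow> real" where
  "meas w E = (\<Sum>i\<in>E. w i)"

definition triple_norm :: "nat \<Rightarrow> nat \<Rightarrow> (nat \<Rightarrow> real) \<Rightarrow> (nat \<Rightarrow> real) \<Rightarrow> real \<Rightarrow> (nat \<Rightarrow> nat \<Rightarrow> real) \<Rightarrow> real" where
  "triple_norm m n \<mu> \<nu> t a =
     (SUP EF \<in> {(E, F). E \<subseteq> {1..m} \<and> E \<noteq> {} \<and> F \<subseteq> {1..n} \<and> F \<noteq> {}}.
        l1_norm m n \<mu> \<nu> (ind_mult (fst EF \<times> snd EF) a)
          / max (meas \<mu> (fst EF)) (meas \<nu> (snd EF) / t))"

definition K_func :: "nat \<Rightarrow> nat \<Rightarrow> (nat \<Rightarrow> real) \<Rightarrow> (nat \<Rightarrow> real) \<Rightarrow> real \<Rightarrow> (nat \<Rightarrow> nat \<Rightarrow> real) \<Rightarrow> real" where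
  "K_func m n \<mu> \<nu> t a =
     Inf {row_norm m n \<nu> b + t * col_norm m n \<mu> c | b c.
            \<forall>i\<in>{1..m}. \<forall>j\<in>{1..n}. a i j = b i j + c i j}"

end

theory Submission
  imports Defs
begin

text \<open>Write \<open>w i j = \<bar>a i j\<bar> \<mu>\<^sub>i \<nu>\<^sub>j\<close>. If \<open>|||a|||\<^sub>t \<le> 1\<close>, every rectangle \<open>E \<times> F\<close> carries
  \<open>w\<close>-mass at most \<open>\<mu>(E) \<or> \<nu>(F)/t\<close>. Applied to \<open>E \<times> F\<close> itself, either the total mass is at most
  \<open>\<mu>(E)\<close>, and then some row \<open>i\<close> carries at most \<open>\<mu>\<^sub>i\<close> and can be put entirely into \<open>A\<close>, or it is
  at most \<open>\<nu>(F)/t\<close>, and some column \<open>j\<close> carries at most \<open>\<nu>\<^sub>j/t\<close> and can be put entirely into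
  \<open>B\<close>. Deleting that row or column preserves the rectangle condition, so induction on
  \<open>|E| + |F|\<close> produces the splitting. Scaling and taking \<open>b = 1\<^sub>A \<cdot> a\<close>, \<open>c = 1\<^sub>B \<cdot> a\<close> gives the
  bound on \<open>K\<^sub>t\<close>.\<close>

definition row_col_split ::
    "'a set \<Rightarrow> 'b set \<Rightarrow> ('a \<Rightarrow> real) \<Rightarrow> ('b \<Rightarrow> real) \<Rightarrow> ('a \<Rightarrow> 'b \<Rightarrow> real) \<Rightarrow> ('a \<times> 'b) set \<Rightarrow> bool"
  where "row_col_split E F p q w A \<longleftrightarrow>
    (\<forall>i\<in>E. (\<Sum>j | j \<in> F \<and> (i, j) \<in> A. w i j) \<le> p i) \<and>
    (\<forall>j\<in>F. (\<Sum>i | i \<in> E \<and> (i, j) \<notin> A. w i j) \<le> q j)"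

lemma row_col_split_transpose:
  assumes "row_col_split E F p q w A"
  shows "row_col_split F E q p (\<lambda>j i. w i j) {(j, i). (i, j) \<notin> A}"
  using assms unfolding row_col_split_def by auto

lemma row_col_split_insert_row:
  assumes "finite E" "i \<in> E" "(\<Sum>j\<in>F. w i j) \<le> p i"
    and "row_col_split (E - {i}) F p q w A"
  shows "row_col_split E F p q w (A \<union> {i} \<times> UNIV)"
  unfolding row_col_split_def
proof (intro conjI ballI)
  fix i' assume "i' \<in> E"
  then show "(\<Sum>j | j \<in> F \<and> (i', j) \<in> A \<union> {i} \<times> UNIV. w i' j) \<le> p i'"
    using assms(3,4) by (cases "i' = i") (auto simp: row_col_split_def)
next
  fix j assume "j \<in> F"
  have "{i'. i' \<in> E \<and> (i', j) \<notin> A \<union> {i} \<times> UNIV} = {i'. i' \<in> E - {i} \<and> (i', j) \<notin> A}"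
    by auto
  then show "(\<Sum>i' | i' \<in> E \<and> (i', j) \<notin> A \<union> {i} \<times> UNIV. w i' j) \<le> q j"
    using assms(4) \<open>j \<in> F\<close> by (simp add: row_col_split_def)
qed

lemma ex_le_of_sum_le:
  fixes f g :: "'a \<Rightarrow> real"
  assumes "finite E" "E \<noteq> {}" "sum f E \<le> sum g E"
  shows "\<exists>i\<in>E. f i \<le> g i"
proof (rule ccontr)
  assume "\<not> (\<exists>i\<in>E. f i \<le> g i)"
  then have "sum g E < sum f E"
    using assms(1,2) by (intro sum_strict_mono) auto
  with assms(3) show False by simp
qed

lemma row_col_split_exists:
  fixes w :: "'a \<Rightarrow> 'b \<Rightarrow> real"
  assumes "finite E" "finite F" "\<forall>i\<in>E. 0 \<le> p i" "\<forall>j\<in>F. 0 \<le> q j"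
    and "\<forall>E'\<subseteq>E. \<forall>F'\<subseteq>F. E' \<noteq> {} \<longrightarrow> F' \<noteq> {} \<longrightarrow>
           (\<Sum>i\<in>E'. \<Sum>j\<in>F'. w i j) \<le> max (sum p E') (sum q F')"
  shows "\<exists>A. row_col_split E F p q w A"
  using assms
proof (induction "card E + card F" arbitrary: E F rule: less_induct)
  case less
  show ?case
  proof (cases "E = {} \<or> F = {}")
    case True
    then show ?thesis
      using less.prems(3,4) by (auto simp: row_col_split_def)
  next
    case False
    then have total: "(\<Sum>i\<in>E. \<Sum>j\<in>F. w i j) \<le> max (sum p E) (sum q F)"
      using less.prems(5) by blast
    consider "(\<Sum>i\<in>E. \<Sum>j\<in>F. w i j) \<le> sum p E" | "(\<Sum>j\<in>F. \<Sum>i\<in>E. w i j) \<le> sum q F"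
      using total sum.swap[of w F E] by linarith
    then show ?thesis
    proof cases
      case 1
      then obtain i where i: "i \<in> E" "(\<Sum>j\<in>F. w i j) \<le> p i"
        using ex_le_of_sum_le less.prems(1) False by blast
      have "card (E - {i}) + card F < card E + card F"
        using card_Diff1_less[OF less.prems(1) i(1)] by simp
      then have "\<exists>A. row_col_split (E - {i}) F p q w A"
        by (rule less.hyps) (use less.prems in \<open>simp_all, meson Diff_subset subset_trans\<close>)
      then obtain A where "row_col_split (E - {i}) F p q w A" ..
      with less.prems(1) i show ?thesis
        by (auto intro: row_col_split_insert_row)
    next
      case 2
      then obtain j where j: "j \<in> F" "(\<Sum>i\<in>E. w i j) \<le> q j"
        using ex_le_of_sum_le less.prems(2) False by blast
      have "card E + card (F - {j}) < card E + card F"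
        using card_Diff1_less[OF less.prems(2) j(1)] by simp
      then have "\<exists>A. row_col_split E (F - {j}) p q w A"
        by (rule less.hyps) (use less.prems in \<open>simp_all, meson Diff_subset subset_trans\<close>)
      then obtain A where "row_col_split E (F - {j}) p q w A" ..
      then have "row_col_split (F - {j}) E q p (\<lambda>j i. w i j) {(j, i). (i, j) \<notin> A}"
        by (rule row_col_split_transpose)
      with less.prems(2) j have "row_col_split F E q p (\<lambda>j i. w i j) ({(j, i). (i, j) \<notin> A} \<union> {j} \<times> UNIV)"
        by (intro row_col_split_insert_row) auto
      from row_col_split_transpose[OF this] show ?thesis
        by auto
    qed
  qed
qed

lemma l1_norm_ind_mult_Times:
  assumes "E \<subseteq> {1..m}" "F \<subseteq> {1..n}"
  shows "l1_norm m n \<mu> \<nu> (ind_mult (E \<times> F) a) = (\<Sum>i\<in>E. \<Sum>j\<in>F. \<bar>a i j\<bar> * \<mu> i * \<nu> j)"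
proof -
  have "l1_norm m n \<mu> \<nu> (ind_mult (E \<times> F) a) =
      (\<Sum>i\<in>{1..m}. if i \<in> E then \<Sum>j\<in>{1..n}. if j \<in> F then \<bar>a i j\<bar> * \<mu> i * \<nu> j else 0 else 0)"
    unfolding l1_norm_def ind_mult_def by (auto intro!: sum.cong)
  also have "\<dots> = (\<Sum>i\<in>{1..m} \<inter> E. \<Sum>j\<in>{1..n} \<inter> F. \<bar>a i j\<bar> * \<mu> i * \<nu> j)"
    by (simp only: sum.inter_restrict[OF finite_atLeastAtMost, symmetric])
  finally show ?thesis
    using assms by (simp add: Int_absorb1)
qed

lemma triple_norm_upper:
  assumes "E \<subseteq> {1..m}" "E \<noteq> {}" "F \<subseteq> {1..n}" "F \<noteq> {}"
  shows "l1_norm m n \<mu> \<nu> (ind_mult (E \<times> F) a) / max (meas \<mu> E) (meas \<nu> F / t)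
         \<le> triple_norm m n \<mu> \<nu> t a"
proof -
  let ?I = "{(E, F). E \<subseteq> {1..m} \<and> E \<noteq> {} \<and> F \<subseteq> {1..n} \<and> F \<noteq> {}}"
  have "finite ?I"
    by (rule finite_subset[of _ "Pow {1..m} \<times> Pow {1..n}"]) auto
  then show ?thesis
    unfolding triple_norm_def using assms
    by (intro cSUP_upper2[where x = "(E, F)"]) (auto intro: bdd_above_finite)
qed

lemma triple_norm_nonneg:
  assumes "m \<ge> 1" "n \<ge> 1" "\<And>i. i \<in> {1..m} \<Longrightarrow> \<mu> i \<ge> 0" "\<And>j. j \<in> {1..n} \<Longrightarrow> \<nu> j \<ge> 0"
  shows "0 \<le> triple_norm m n \<mu> \<nu> t a"
proof -
  have "0 \<le> l1_norm m n \<mu> \<nu> (ind_mult ({1} \<times> {1}) a) / max (meas \<mu> {1}) (meas \<nu> {1} / t)"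
    unfolding l1_norm_def meas_def using assms
    by (intro divide_nonneg_nonneg sum_nonneg mult_nonneg_nonneg) (auto simp: le_max_iff_disj)
  also have "\<dots> \<le> triple_norm m n \<mu> \<nu> t a"
    by (rule triple_norm_upper) (use assms in auto)
  finally show ?thesis .
qed

lemma row_norm_le_iff:
  assumes "m \<ge> 1"
  shows "row_norm m n \<nu> b \<le> s \<longleftrightarrow> (\<forall>i\<in>{1..m}. (\<Sum>j\<in>{1..n}. \<bar>b i j\<bar> * \<nu> j) \<le> s)"
  unfolding row_norm_def using assms by (subst Max_le_iff) auto

lemma col_norm_le_iff:
  assumes "n \<ge> 1"
  shows "col_norm m n \<mu> b \<le> s \<longleftrightarrow> (\<forall>j\<in>{1..n}. (\<Sum>i\<in>{1..m}. \<bar>b i j\<bar> * \<mu> i) \<le> s)"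
  unfolding col_norm_def using assms by (subst Max_le_iff) auto

lemma row_norm_nonneg:
  assumes "m \<ge> 1" "\<And>j. j \<in> {1..n} \<Longrightarrow> \<nu> j \<ge> 0"
  shows "0 \<le> row_norm m n \<nu> b"
proof -
  have "0 \<le> (\<Sum>j\<in>{1..n}. \<bar>b 1 j\<bar> * \<nu> j)"
    using assms by (intro sum_nonneg) simp
  also have "\<dots> \<le> row_norm m n \<nu> b"
    unfolding row_norm_def using assms by (intro Max_ge) auto
  finally show ?thesis .
qed

lemma col_norm_nonneg:
  assumes "n \<ge> 1" "\<And>i. i \<in> {1..m} \<Longrightarrow> \<mu> i \<ge> 0"
  shows "0 \<le> col_norm m n \<mu> b"
proof -
  have "0 \<le> (\<Sum>i\<in>{1..m}. \<bar>b i 1\<bar> * \<mu> i)"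
    using assms by (intro sum_nonneg) simp
  also have "\<dots> \<le> col_norm m n \<mu> b"
    unfolding col_norm_def using assms by (intro Max_ge) auto
  finally show ?thesis .
qed

lemma K_func_le:
  assumes "m \<ge> 1" "n \<ge> 1" "\<And>i. i \<in> {1..m} \<Longrightarrow> \<mu> i \<ge> 0" "\<And>j. j \<in> {1..n} \<Longrightarrow> \<nu> j \<ge> 0"
    and "t \<ge> 0" and "\<forall>i\<in>{1..m}. \<forall>j\<in>{1..n}. a i j = b i j + c i j"
  shows "K_func m n \<mu> \<nu> t a \<le> row_norm m n \<nu> b + t * col_norm m n \<mu> c"
  unfolding K_func_def
proof (rule cInf_lower)
  show "row_norm m n \<nu> b + t * col_norm m n \<mu> c \<in> {row_norm m n \<nu> b + t * col_norm m n \<mu> c | b c.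
          \<forall>i\<in>{1..m}. \<forall>j\<in>{1..n}. a i j = b i j + c i j}"
    using assms(6) by blast
  show "bdd_below {row_norm m n \<nu> b + t * col_norm m n \<mu> c | b c.
          \<forall>i\<in>{1..m}. \<forall>j\<in>{1..n}. a i j = b i j + c i j}"
    using row_norm_nonneg[OF assms(1,4)] col_norm_nonneg[OF assms(2,3)] \<open>t \<ge> 0\<close>
    by (intro bdd_belowI[of _ 0]) auto
qed

lemma triple_norm_rectangle_bound:
  assumes "\<And>i. i \<in> {1..m} \<Longrightarrow> \<mu> i > 0" and "triple_norm m n \<mu> \<nu> t a \<le> s" "0 \<le> s"
    and EF: "E \<subseteq> {1..m}" "F \<subseteq> {1..n}" "E \<noteq> {}" "F \<noteq> {}"
  shows "(\<Sum>i\<in>E. \<Sum>j\<in>F. \<bar>a i j\<bar> * \<mu> i * \<nu> j) \<le> max (\<Sum>i\<in>E. s * \<mu> i) (\<Sum>j\<in>F. s / t * \<nu> j)"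
proof -
  have "0 < meas \<mu> E"
    unfolding meas_def using EF assms(1) by (intro sum_pos) (auto intro: finite_subset)
  then have pos: "0 < max (meas \<mu> E) (meas \<nu> F / t)"
    by linarith
  have "(\<Sum>i\<in>E. \<Sum>j\<in>F. \<bar>a i j\<bar> * \<mu> i * \<nu> j) / max (meas \<mu> E) (meas \<nu> F / t) \<le> s"
    using order_trans[OF triple_norm_upper[OF EF(1,3,2,4)] assms(2)] l1_norm_ind_mult_Times[OF EF(1,2)]
    by simp
  then have "(\<Sum>i\<in>E. \<Sum>j\<in>F. \<bar>a i j\<bar> * \<mu> i * \<nu> j) \<le> s * max (meas \<mu> E) (meas \<nu> F / t)"
    using pos by (simp add: divide_le_eq)
  also have "\<dots> = max (\<Sum>i\<in>E. s * \<mu> i) (\<Sum>j\<in>F. s / t * \<nu> j)"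
    using \<open>0 \<le> s\<close> by (simp add: max_mult_distrib_left meas_def sum_distrib_left sum_divide_distrib)
  finally show ?thesis .
qed

lemma row_col_split_norm_bounds:
  assumes "m \<ge> 1" "n \<ge> 1" and \<mu>_pos: "\<And>i. i \<in> {1..m} \<Longrightarrow> \<mu> i > 0"
    and \<nu>_pos: "\<And>j. j \<in> {1..n} \<Longrightarrow> \<nu> j > 0"
    and split: "row_col_split {1..m} {1..n} (\<lambda>i. s * \<mu> i) (\<lambda>j. s' * \<nu> j)
                  (\<lambda>i j. \<bar>a i j\<bar> * \<mu> i * \<nu> j) A"
  shows "row_norm m n \<nu> (ind_mult (A \<inter> {1..m} \<times> {1..n}) a) \<le> s"
    and "col_norm m n \<mu> (ind_mult ({1..m} \<times> {1..n} - A) a) \<le> s'"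
proof -
  show "row_norm m n \<nu> (ind_mult (A \<inter> {1..m} \<times> {1..n}) a) \<le> s"
    unfolding row_norm_le_iff[OF \<open>m \<ge> 1\<close>]
  proof
    fix i assume i: "i \<in> {1..m}"
    have "\<mu> i * (\<Sum>j\<in>{1..n}. \<bar>ind_mult (A \<inter> {1..m} \<times> {1..n}) a i j\<bar> * \<nu> j)
        = (\<Sum>j\<in>{1..n}. if (i, j) \<in> A then \<bar>a i j\<bar> * \<mu> i * \<nu> j else 0)"
      using i by (auto simp: sum_distrib_left ind_mult_def intro!: sum.cong)
    also have "\<dots> = (\<Sum>j | j \<in> {1..n} \<and> (i, j) \<in> A. \<bar>a i j\<bar> * \<mu> i * \<nu> j)"
      by (rule sum.inter_filter[symmetric]) simp
    also have "\<dots> \<le> \<mu> i * s"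
      using split i by (simp add: row_col_split_def mult.commute)
    finally show "(\<Sum>j\<in>{1..n}. \<bar>ind_mult (A \<inter> {1..m} \<times> {1..n}) a i j\<bar> * \<nu> j) \<le> s"
      using \<mu>_pos[OF i] by (rule mult_left_le_imp_le)
  qed
  show "col_norm m n \<mu> (ind_mult ({1..m} \<times> {1..n} - A) a) \<le> s'"
    unfolding col_norm_le_iff[OF \<open>n \<ge> 1\<close>]
  proof
    fix j assume j: "j \<in> {1..n}"
    have "\<nu> j * (\<Sum>i\<in>{1..m}. \<bar>ind_mult ({1..m} \<times> {1..n} - A) a i j\<bar> * \<mu> i)
        = (\<Sum>i\<in>{1..m}. if (i, j) \<notin> A then \<bar>a i j\<bar> * \<mu> i * \<nu> j else 0)"
      using j by (auto simp: sum_distrib_left ind_mult_def intro!: sum.cong)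
    also have "\<dots> = (\<Sum>i | i \<in> {1..m} \<and> (i, j) \<notin> A. \<bar>a i j\<bar> * \<mu> i * \<nu> j)"
      by (rule sum.inter_filter[symmetric]) simp
    also have "\<dots> \<le> \<nu> j * s'"
      using split j by (simp add: row_col_split_def mult.commute)
    finally show "(\<Sum>i\<in>{1..m}. \<bar>ind_mult ({1..m} \<times> {1..n} - A) a i j\<bar> * \<mu> i) \<le> s'"
      using \<nu>_pos[OF j] by (rule mult_left_le_imp_le)
  qed
qed

lemma triple_norm_split:
  assumes "m \<ge> 1" "n \<ge> 1" and \<mu>_pos: "\<And>i. i \<in> {1..m} \<Longrightarrow> \<mu> i > 0"
    and \<nu>_pos: "\<And>j. j \<in> {1..n} \<Longrightarrow> \<nu> j > 0" and "t > 0"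
    and "triple_norm m n \<mu> \<nu> t a \<le> s"
  shows "\<exists>A B. A \<union> B = {1..m} \<times> {1..n} \<and> A \<inter> B = {} \<and>
           row_norm m n \<nu> (ind_mult A a) \<le> s \<and> col_norm m n \<mu> (ind_mult B a) \<le> s / t"
proof -
  have "0 \<le> s"
    using triple_norm_nonneg[of m n \<mu> \<nu> t a] assms by (meson less_imp_le order_trans)
  then have "\<forall>i\<in>{1..m}. 0 \<le> s * \<mu> i" "\<forall>j\<in>{1..n}. 0 \<le> s / t * \<nu> j"
    using \<open>t > 0\<close> \<mu>_pos \<nu>_pos by (simp_all add: less_imp_le)
  moreover have "\<forall>E\<subseteq>{1..m}. \<forall>F\<subseteq>{1..n}. E \<noteq> {} \<longrightarrow> F \<noteq> {} \<longrightarrow>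
      (\<Sum>i\<in>E. \<Sum>j\<in>F. \<bar>a i j\<bar> * \<mu> i * \<nu> j) \<le> max (\<Sum>i\<in>E. s * \<mu> i) (\<Sum>j\<in>F. s / t * \<nu> j)"
    using triple_norm_rectangle_bound[of m \<mu> n \<nu> t a s] \<mu>_pos assms(6) \<open>0 \<le> s\<close> by blast
  ultimately have "\<exists>A. row_col_split {1..m} {1..n} (\<lambda>i. s * \<mu> i) (\<lambda>j. s / t * \<nu> j)
                         (\<lambda>i j. \<bar>a i j\<bar> * \<mu> i * \<nu> j) A"
    by (intro row_col_split_exists) simp_all
  then obtain A where "row_col_split {1..m} {1..n} (\<lambda>i. s * \<mu> i) (\<lambda>j. s / t * \<nu> j)
                         (\<lambda>i j. \<bar>a i j\<bar> * \<mu> i * \<nu> j) A" ..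
  from row_col_split_norm_bounds[OF assms(1-4) this]
  show ?thesis
    by (intro exI[of _ "A \<inter> {1..m} \<times> {1..n}"] exI[of _ "{1..m} \<times> {1..n} - A"]) auto
qed

theorem proposition1p1:
  fixes m n :: nat and \<mu> \<nu> :: "nat \<Rightarrow> real" and t :: real
  assumes "m \<ge> 1" and "n \<ge> 1"
    and "\<And>i. i \<in> {1..m} \<Longrightarrow> \<mu> i > 0"
    and "\<And>j. j \<in> {1..n} \<Longrightarrow> \<nu> j > 0"
    and "t > 0"
  shows "(\<forall>a. triple_norm m n \<mu> \<nu> t a \<le> 1 \<longrightarrow>
            (\<exists>A B. A \<union> B = {1..m} \<times> {1..n} \<and> A \<inter> B = {} \<and>
                   row_norm m n \<nu> (ind_mult A a) \<le> 1 \<and>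
                   col_norm m n \<mu> (ind_mult B a) \<le> 1 / t))
       \<and> (\<forall>a. K_func m n \<mu> \<nu> t a \<le> 2 * triple_norm m n \<mu> \<nu> t a)"
proof (intro conjI allI impI)
  fix a
  assume "triple_norm m n \<mu> \<nu> t a \<le> 1"
  then show "\<exists>A B. A \<union> B = {1..m} \<times> {1..n} \<and> A \<inter> B = {} \<and>
               row_norm m n \<nu> (ind_mult A a) \<le> 1 \<and> col_norm m n \<mu> (ind_mult B a) \<le> 1 / t"
    using triple_norm_split[of m n \<mu> \<nu> t a, OF assms] by simp
next
  fix a
  let ?s = "triple_norm m n \<mu> \<nu> t a"
  obtain A B where AB: "A \<union> B = {1..m} \<times> {1..n}" "A \<inter> B = {}"
    and row: "row_norm m n \<nu> (ind_mult A a) \<le> ?s" and col: "col_norm m n \<mu> (ind_mult B a) \<le> ?s / t"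
    using triple_norm_split[of m n \<mu> \<nu> t a, OF assms order_refl] by blast
  have "\<forall>i\<in>{1..m}. \<forall>j\<in>{1..n}. a i j = ind_mult A a i j + ind_mult B a i j"
    using AB unfolding ind_mult_def by auto
  then have "K_func m n \<mu> \<nu> t a \<le> row_norm m n \<nu> (ind_mult A a) + t * col_norm m n \<mu> (ind_mult B a)"
    using assms by (intro K_func_le) (auto intro: less_imp_le)
  also have "\<dots> \<le> ?s + t * (?s / t)"
    using row col \<open>t > 0\<close> by (intro add_mono mult_left_mono) auto
  also have "\<dots> = 2 * ?s"
    using \<open>t > 0\<close> by simp
  finally show "K_func m n \<mu> \<nu> t a \<le> 2 * ?s" .
qed

end
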